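(* Let $A\in\mathcal{C}_n$ and let $u,v$ be minimal zeros of $A$ with supports $\operatorname{Supp}(u)=I$, $\operatorname{Supp}(v)=J$. Assume that $J\setminus I=\{k\}$ consists of exactly one element. Then every zero $w$ of $A$ with $\operatorname{Supp}(w)\subset I\cup J$ can be written as $w=\alpha u+\beta v$ with $\alpha,\beta\ge 0$. In particular, up to multiplication by a positive constant, $A$ has no minimal zeros $w$ with $\operatorname{Supp}(w)\subset I\cup J$ other than $u$ and $v$.
   Context: $\mathcal{C}_n$ denotes the cone of copositive matrices: real symmetric $n\times n$ matrices $A$ with $x^TAx\ge 0$ for all $x\in\mathbb{R}^n_+$. For $A\in\mathcal{C}_n$, a zero of $A$ is a nonzero vector $u\in\mathbb{R}^n_+$ with $u^TAu=0$. The support of $u\in\mathbb{R}^n$ is $\operatorname{Supp}(u)=\{i : u_i\neq 0\}$. A zero $u$ of $A$ is minimal if there is no zero $v$ of $A$ with $\operatorname{Supp}(v)\subsetneq\operatorname{Supp}(u)$. *)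

theory Defs
  imports "HOL-Analysis.Analysis"
begin

definition nonneg_vec :: "real^'n \<Rightarrow> bool" where
  "nonneg_vec x \<longleftrightarrow> (\<forall>i. x $ i \<ge> 0)"

definition copositive :: "real^'n^'n \<Rightarrow> bool" where
  "copositive A \<longleftrightarrow> transpose A = A \<and> (\<forall>x. nonneg_vec x \<longrightarrow> x \<bullet> (A *v x) \<ge> 0)"

definition supp :: "real^'n \<Rightarrow> 'n set" where
  "supp u = {i. u $ i \<noteq> 0}"

definition is_zero :: "real^'n^'n \<Rightarrow> real^'n \<Rightarrow> bool" where
  "is_zero A u \<longleftrightarrow> u \<noteq> 0 \<and> nonneg_vec u \<and> u \<bullet> (A *v u) = 0"

definition minimal_zero :: "real^'n^'n \<Rightarrow> real^'n \<Rightarrow> bool" where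
  "minimal_zero A u \<longleftrightarrow> is_zero A u \<and> \<not> (\<exists>v. is_zero A v \<and> supp v \<subset> supp u)"

end

theory Submission
  imports Defs
begin

text \<open>Around a zero u of a copositive matrix A, every direction d supported in Supp(u) keeps
  u \<plusminus> s d nonnegative for small s; hence A is positive semidefinite on the coordinate subspace of
  Supp(u). If u is minimal, every isotropic vector of that subspace is a multiple of u: otherwise
  moving along the line u + s d until a coordinate vanishes gives a zero with smaller support. Subtracting the multiple of v that kills the k-th
  coordinate gives a vector w' supported in I with quadratic form -2t (w \<bullet> A v) \<le> 0, so w' is
  isotropic and w' = c u. A negative c would force I \<subset> J, contradicting the minimality of v.
  Finally a positive combination of u and v has support I \<union> J \<supset> I, so it is not minimal.\<close>

lemma nonneg_vec_supp_iff:
  assumes "nonneg_vec x"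
  shows "i \<in> supp x \<longleftrightarrow> x $ i > 0"
  using assms unfolding nonneg_vec_def supp_def by (auto simp: less_le)

lemma supp_add_scaleR_subset:
  "supp x \<subseteq> I \<Longrightarrow> supp y \<subseteq> I \<Longrightarrow> supp (x + r *\<^sub>R y) \<subseteq> I"
  unfolding supp_def by (simp add: subset_iff) (metis add.right_neutral mult_zero_right)

lemma supp_nonneg_combination:
  assumes "nonneg_vec x" "nonneg_vec y" "\<alpha> > 0" "\<beta> > 0"
  shows "supp (\<alpha> *\<^sub>R x + \<beta> *\<^sub>R y) = supp x \<union> supp y"
  using assms unfolding nonneg_vec_def supp_def
  by (auto simp: add_nonneg_eq_0_iff mult_nonneg_nonneg)

lemma bilinear_symmetric:
  assumes "transpose A = (A::real^'n^'n)"
  shows "x \<bullet> (A *v y) = y \<bullet> (A *v x)"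
  by (metis assms dot_lmul_matrix transpose_matrix_vector inner_commute)

lemma quadratic_add_scaleR:
  assumes "transpose A = (A::real^'n^'n)"
  shows "(x + s *\<^sub>R y) \<bullet> (A *v (x + s *\<^sub>R y))
           = x \<bullet> (A *v x) + 2 * s * (x \<bullet> (A *v y)) + s\<^sup>2 * (y \<bullet> (A *v y))"
  using bilinear_symmetric[OF assms, of y x]
  by (simp add: matrix_vector_right_distrib matrix_vector_mult_scaleR inner_add_left
      inner_add_right algebra_simps power2_eq_square)

lemma linear_coeff_zero_if_nonneg:
  fixes a b :: real
  assumes "\<And>r. 0 \<le> 2 * r * b + r\<^sup>2 * a"
  shows "b = 0"
proof -
  define c where "c = \<bar>a\<bar> + 1"
  have "c > 0" unfolding c_def by simp
  have "0 \<le> (2 * (- b / c) * b + (- b / c)\<^sup>2 * a) * c\<^sup>2"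
    using assms[of "- b / c"] by simp
  also have "\<dots> = b\<^sup>2 * (a - 2 * c)"
    using \<open>c > 0\<close> by (simp add: field_simps power2_eq_square)
  finally have "b\<^sup>2 * (2 * c - a) \<le> 0" by (simp add: algebra_simps)
  moreover have "2 * c - a > 0" unfolding c_def by (simp add: abs_if)
  ultimately show ?thesis by (simp add: mult_le_0_iff)
qed

lemma eventually_nonneg_vec_add_scaleR:
  fixes x d :: "real^'n"
  assumes "nonneg_vec x" "supp d \<subseteq> supp x"
  shows "\<forall>\<^sub>F t in nhds 0. nonneg_vec (x + t *\<^sub>R d)"
  unfolding nonneg_vec_def
proof (intro eventually_all_finite allI)
  fix i
  show "\<forall>\<^sub>F t in nhds 0. 0 \<le> (x + t *\<^sub>R d) $ i"
  proof (cases "d $ i = 0")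
    case False
    then have "x $ i > 0" using assms nonneg_vec_supp_iff unfolding supp_def by blast
    moreover have "((\<lambda>t. x $ i + t * d $ i) \<longlongrightarrow> x $ i + 0 * d $ i) (nhds 0)"
      by (intro tendsto_intros filterlim_ident)
    ultimately have "\<forall>\<^sub>F t in nhds 0. 0 < x $ i + t * d $ i"
      by (simp add: order_tendstoD(1))
    then show ?thesis by (simp add: eventually_mono)
  qed (use assms in \<open>simp add: nonneg_vec_def\<close>)
qed

lemma copositive_psd_on_supp_of_zero:
  fixes A :: "real^'n^'n"
  assumes "copositive A" "is_zero A u" "supp d \<subseteq> supp u"
  shows "d \<bullet> (A *v d) \<ge> 0"
proof -
  have sym: "transpose A = A" and cop: "\<And>x. nonneg_vec x \<Longrightarrow> x \<bullet> (A *v x) \<ge> 0"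
    using assms(1) unfolding copositive_def by auto
  have "nonneg_vec u" and uq: "u \<bullet> (A *v u) = 0" using assms(2) unfolding is_zero_def by auto
  then obtain e where "e > 0" and e: "\<And>t. dist t 0 < e \<Longrightarrow> nonneg_vec (u + t *\<^sub>R d)"
    using eventually_nonneg_vec_add_scaleR[OF _ assms(3)] unfolding eventually_nhds_metric
    by blast
  define s where "s = e / 2"
  have "s > 0" "nonneg_vec (u + s *\<^sub>R d)" "nonneg_vec (u + (- s) *\<^sub>R d)"
    using \<open>e > 0\<close> e[of s] e[of "- s"] by (auto simp: s_def)
  then have "0 \<le> (u + s *\<^sub>R d) \<bullet> (A *v (u + s *\<^sub>R d))
                + (u + (- s) *\<^sub>R d) \<bullet> (A *v (u + (- s) *\<^sub>R d))"
    using cop by (simp add: add_nonneg_nonneg)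
  also have "\<dots> = 2 * s\<^sup>2 * (d \<bullet> (A *v d))" unfolding quadratic_add_scaleR[OF sym] uq by simp
  finally show ?thesis using \<open>s > 0\<close> by (simp add: zero_le_mult_iff)
qed

lemma copositive_isotropic_orthogonal:
  fixes A :: "real^'n^'n"
  assumes "copositive A" "is_zero A u" "supp d \<subseteq> supp u" "supp y \<subseteq> supp u"
    and "d \<bullet> (A *v d) = 0"
  shows "d \<bullet> (A *v y) = 0"
proof (rule linear_coeff_zero_if_nonneg)
  have sym: "transpose A = A" using assms(1) unfolding copositive_def by auto
  fix r
  have "0 \<le> (d + r *\<^sub>R y) \<bullet> (A *v (d + r *\<^sub>R y))"
    using copositive_psd_on_supp_of_zero[OF assms(1,2) supp_add_scaleR_subset[OF assms(3,4)]] .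
  then show "0 \<le> 2 * r * (d \<bullet> (A *v y)) + r\<^sup>2 * (y \<bullet> (A *v y))"
    unfolding quadratic_add_scaleR[OF sym] assms(5) by simp
qed

text \<open>The step length s is the largest one keeping u + s d nonnegative, so u + s d acquires a
  new zero coordinate; minimality of u then forces u + s d = 0.\<close>

lemma minimal_zero_line_proportional:
  fixes A :: "real^'n^'n"
  assumes "minimal_zero A u" "supp d \<subseteq> supp u"
    and line: "\<And>s. (u + s *\<^sub>R d) \<bullet> (A *v (u + s *\<^sub>R d)) = 0" and "d $ i < 0"
  shows "\<exists>c. d = c *\<^sub>R u"
proof (rule ccontr)
  assume not_prop: "\<nexists>c. d = c *\<^sub>R u"
  have "is_zero A u" and no_smaller: "\<nexists>z. is_zero A z \<and> supp z \<subset> supp u"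
    using assms(1) unfolding minimal_zero_def by auto
  then have u_nonneg: "nonneg_vec u" unfolding is_zero_def by auto
  define N where "N = {i. d $ i < 0}"
  define f where "f i = u $ i / (- d $ i)" for i
  define s where "s = Min (f ` N)"
  have u_pos: "u $ l > 0" if "l \<in> N" for l
  proof -
    have "l \<in> supp d" using that unfolding N_def supp_def by simp
    then show ?thesis using assms(2) nonneg_vec_supp_iff[OF u_nonneg] by blast
  qed
  have "N \<noteq> {}" using \<open>d $ i < 0\<close> unfolding N_def by auto
  then have "s \<in> f ` N" unfolding s_def by (intro Min_in) auto
  then obtain j where j: "j \<in> N" "f j = s" by blast
  have "s > 0" using j u_pos[of j] unfolding N_def f_def by (auto simp: divide_pos_neg)
  define z where "z = u + s *\<^sub>R d"
  have "nonneg_vec z" unfolding nonneg_vec_def z_def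
  proof
    fix i
    show "0 \<le> (u + s *\<^sub>R d) $ i"
    proof (cases "i \<in> N")
      case True
      then have "s \<le> u $ i / (- d $ i)" "- d $ i > 0"
        unfolding s_def f_def N_def by (auto intro: Min_le)
      then have "s * (- d $ i) \<le> u $ i" using pos_le_divide_eq by blast
      then show ?thesis by simp
    next
      case False
      then show ?thesis using u_nonneg \<open>s > 0\<close> unfolding nonneg_vec_def N_def by simp
    qed
  qed
  moreover have "z \<noteq> 0"
  proof
    assume "z = 0"
    then have "d = (- 1 / s) *\<^sub>R u"
      using \<open>s > 0\<close> unfolding z_def by (simp add: vec_eq_iff field_simps add_eq_0_iff)
    with not_prop show False by blast
  qed
  moreover have "supp z \<subset> supp u"
  proof -
    have "z $ j = 0" using j unfolding z_def f_def N_def by (simp add: field_simps)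
    moreover have "j \<in> supp u" using u_pos[OF j(1)] by (simp add: supp_def)
    moreover have "supp z \<subseteq> supp u" unfolding z_def
      by (rule supp_add_scaleR_subset) (use assms(2) in auto)
    ultimately show ?thesis by (auto simp: supp_def)
  qed
  ultimately show False using no_smaller line unfolding z_def is_zero_def by blast
qed

lemma minimal_zero_isotropic_proportional:
  fixes A :: "real^'n^'n"
  assumes "copositive A" "minimal_zero A u" "supp d \<subseteq> supp u" "d \<bullet> (A *v d) = 0"
  shows "\<exists>c. d = c *\<^sub>R u"
proof -
  have sym: "transpose A = A" using assms(1) unfolding copositive_def by auto
  have "is_zero A u" using assms(2) unfolding minimal_zero_def by auto
  then have uq: "u \<bullet> (A *v u) = 0" unfolding is_zero_def by auto
  have "d \<bullet> (A *v u) = 0"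
    using copositive_isotropic_orthogonal[OF assms(1) \<open>is_zero A u\<close> assms(3) order_refl assms(4)] .
  then have "u \<bullet> (A *v d) = 0" using bilinear_symmetric[OF sym] by metis
  then have line: "(u + s *\<^sub>R d) \<bullet> (A *v (u + s *\<^sub>R d)) = 0" for s
    using uq assms(4) unfolding quadratic_add_scaleR[OF sym] by simp
  have line_neg: "(u + s *\<^sub>R (- d)) \<bullet> (A *v (u + s *\<^sub>R (- d))) = 0" for s
    using line[of "- s"] by simp
  consider (neg) i where "d $ i < 0" | (pos) i where "(- d) $ i < 0" | (zero) "d = 0"
    by (metis linorder_neqE_linordered_idom neg_less_0_iff_less vec_eq_iff vector_uminus_component
        zero_index)
  then show ?thesis
  proof cases
    case neg
    then show ?thesis using minimal_zero_line_proportional[OF assms(2,3) line] by blast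
  next
    case pos
    have "supp (- d) \<subseteq> supp u" using assms(3) by (simp add: supp_def)
    then obtain c where "- d = c *\<^sub>R u"
      using minimal_zero_line_proportional[OF assms(2) _ line_neg pos] by blast
    then have "d = (- c) *\<^sub>R u" by (metis minus_minus scaleR_minus_left)
    then show ?thesis by blast
  next
    case zero
    then show ?thesis by (intro exI[of _ 0]) simp
  qed
qed

lemma zero_in_cone_of_minimal_zeros:
  fixes A :: "real^'n^'n" and u v w :: "real^'n" and k :: 'n
  assumes cop: "copositive A" and "minimal_zero A u" "minimal_zero A v"
    and k: "supp v - supp u = {k}"
    and "is_zero A w" and w_supp: "supp w \<subseteq> supp u \<union> supp v"
  shows "\<exists>\<alpha> \<beta>. \<alpha> \<ge> 0 \<and> \<beta> \<ge> 0 \<and> w = \<alpha> *\<^sub>R u + \<beta> *\<^sub>R v"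
proof -
  have sym: "transpose A = A" and cop': "\<And>x. nonneg_vec x \<Longrightarrow> x \<bullet> (A *v x) \<ge> 0"
    using cop unfolding copositive_def by auto
  have "is_zero A u" "is_zero A v" and v_min: "\<nexists>x. is_zero A x \<and> supp x \<subset> supp v"
    using assms(2,3) unfolding minimal_zero_def by auto
  then have u_nonneg: "nonneg_vec u" and v_nonneg: "nonneg_vec v" and w_nonneg: "nonneg_vec w"
    and vq: "v \<bullet> (A *v v) = 0" and wq: "w \<bullet> (A *v w) = 0"
    using \<open>is_zero A w\<close> unfolding is_zero_def by auto
  have "k \<in> supp v" using k by auto
  then have "v $ k > 0" using nonneg_vec_supp_iff[OF v_nonneg] by simp
  define t where "t = w $ k / v $ k"
  have "t \<ge> 0" unfolding t_def using \<open>v $ k > 0\<close> w_nonneg unfolding nonneg_vec_def by simp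
  define w' where "w' = w + (- t) *\<^sub>R v"
  have w'_supp: "supp w' \<subseteq> supp u"
  proof
    fix i assume i: "i \<in> supp w'"
    show "i \<in> supp u"
    proof (rule ccontr)
      assume "i \<notin> supp u"
      have "w' $ k = 0" unfolding w'_def t_def using \<open>v $ k > 0\<close> by simp
      then have "i \<noteq> k" using i by (auto simp: supp_def)
      then have "i \<notin> supp v" "i \<notin> supp w" using k w_supp \<open>i \<notin> supp u\<close> by auto
      then show False using i unfolding w'_def supp_def by simp
    qed
  qed
  have "0 \<le> (w + 1 *\<^sub>R v) \<bullet> (A *v (w + 1 *\<^sub>R v))"
    using w_nonneg v_nonneg by (intro cop') (simp add: nonneg_vec_def)
  then have "w \<bullet> (A *v v) \<ge> 0" unfolding quadratic_add_scaleR[OF sym] wq vq by simp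
  moreover have "w' \<bullet> (A *v w') = - 2 * t * (w \<bullet> (A *v v))"
    unfolding w'_def quadratic_add_scaleR[OF sym] wq vq by simp
  moreover have "w' \<bullet> (A *v w') \<ge> 0"
    using copositive_psd_on_supp_of_zero[OF cop \<open>is_zero A u\<close> w'_supp] .
  ultimately have "w' \<bullet> (A *v w') = 0"
    using mult_nonneg_nonneg[OF \<open>t \<ge> 0\<close>, of "w \<bullet> (A *v v)"] by linarith
  then obtain c where "w' = c *\<^sub>R u"
    using minimal_zero_isotropic_proportional[OF cop assms(2) w'_supp] by blast
  then have w_eq: "w = c *\<^sub>R u + t *\<^sub>R v" unfolding w'_def by (simp add: algebra_simps)
  have "c \<ge> 0"
  proof (rule ccontr)
    assume "\<not> c \<ge> 0"
    have "supp u \<subseteq> supp v"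
    proof
      fix i assume "i \<in> supp u"
      then have "c * u $ i < 0"
        using \<open>\<not> c \<ge> 0\<close> nonneg_vec_supp_iff[OF u_nonneg] by (simp add: mult_neg_pos)
      moreover have "0 \<le> c * u $ i + t * v $ i"
        using w_nonneg unfolding w_eq nonneg_vec_def by simp
      ultimately show "i \<in> supp v" by (auto simp: supp_def)
    qed
    then have "supp u \<subset> supp v" using k by auto
    with v_min \<open>is_zero A u\<close> show False by blast
  qed
  with \<open>t \<ge> 0\<close> w_eq show ?thesis by blast
qed

lemma minimal_zero_nonneg_combination:
  fixes A :: "real^'n^'n"
  assumes "minimal_zero A w" "is_zero A u" "nonneg_vec v" "\<not> supp v \<subseteq> supp u"
    and "\<alpha> \<ge> 0" "\<beta> \<ge> 0" and w_eq: "w = \<alpha> *\<^sub>R u + \<beta> *\<^sub>R v"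
  shows "\<exists>c>0. w = c *\<^sub>R u \<or> w = c *\<^sub>R v"
proof -
  have "w \<noteq> 0" and w_min: "\<nexists>x. is_zero A x \<and> supp x \<subset> supp w"
    using assms(1) unfolding minimal_zero_def is_zero_def by auto
  have "\<not> (\<alpha> > 0 \<and> \<beta> > 0)"
  proof
    assume "\<alpha> > 0 \<and> \<beta> > 0"
    then have "supp w = supp u \<union> supp v"
      using w_eq supp_nonneg_combination assms(2,3) unfolding is_zero_def by blast
    then have "supp u \<subset> supp w" using assms(4) by auto
    with w_min \<open>is_zero A u\<close> show False by blast
  qed
  then consider "\<alpha> > 0" "w = \<alpha> *\<^sub>R u" | "\<beta> > 0" "w = \<beta> *\<^sub>R v"
    using \<open>w \<noteq> 0\<close> \<open>\<alpha> \<ge> 0\<close> \<open>\<beta> \<ge> 0\<close> w_eq by (cases "\<alpha> = 0"; cases "\<beta> = 0") auto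
  then show ?thesis by cases blast+
qed

theorem corollary3p13:
  fixes A :: "real^'n^'n" and u v :: "real^'n" and k :: 'n
  assumes "copositive A"
    and "minimal_zero A u" and "minimal_zero A v"
    and "supp v - supp u = {k}"
  shows "(\<forall>w. is_zero A w \<and> supp w \<subseteq> supp u \<union> supp v \<longrightarrow>
            (\<exists>\<alpha> \<beta>. \<alpha> \<ge> 0 \<and> \<beta> \<ge> 0 \<and> w = \<alpha> *\<^sub>R u + \<beta> *\<^sub>R v))
       \<and> (\<forall>w. minimal_zero A w \<and> supp w \<subseteq> supp u \<union> supp v \<longrightarrow>
            (\<exists>c>0. w = c *\<^sub>R u \<or> w = c *\<^sub>R v))"
proof (intro conjI allI impI)
  fix w assume "is_zero A w \<and> supp w \<subseteq> supp u \<union> supp v"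
  then show "\<exists>\<alpha> \<beta>. \<alpha> \<ge> 0 \<and> \<beta> \<ge> 0 \<and> w = \<alpha> *\<^sub>R u + \<beta> *\<^sub>R v"
    using zero_in_cone_of_minimal_zeros[OF assms] by blast
next
  fix w assume w: "minimal_zero A w \<and> supp w \<subseteq> supp u \<union> supp v"
  then have "is_zero A w" unfolding minimal_zero_def by blast
  then obtain \<alpha> \<beta> where "\<alpha> \<ge> 0" "\<beta> \<ge> 0" "w = \<alpha> *\<^sub>R u + \<beta> *\<^sub>R v"
    using zero_in_cone_of_minimal_zeros[OF assms] w by blast
  moreover have "is_zero A u" "nonneg_vec v" "\<not> supp v \<subseteq> supp u"
    using assms(2-4) unfolding minimal_zero_def is_zero_def by auto
  ultimately show "\<exists>c>0. w = c *\<^sub>R u \<or> w = c *\<^sub>R v"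
    using w minimal_zero_nonneg_combination by metis
qed

end
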